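(* Let $X\subset\mathbb{R}^n$. There exists a minimal factorization of $X$: a partition $J_1,\dots,J_N$ of $\{1,\dots,n\}$ inducing a factorization of $X$ such that for every partition $I_1,\dots,I_M$ of $\{1,\dots,n\}$ inducing a factorization of $X$ one has $I_i=\bigcup_{k:\,J_k\subset I_i}J_k$ for all $i=1,\dots,M$.
   Context: A partition $J_1,\dots,J_N$ of $\{1,\dots,n\}$ induces a factorization of $X$ (and $X$ factors with respect to it) if there exist sets $X_i\subset\mathbb{R}^{|J_i|}$ such that $X=\{x\in\mathbb{R}^n: P_{J_i}x\in X_i \text{ for } i=1,\dots,N\}$, where $P_{J}x=(x_j)_{j\in J}$ is the canonical projection. *)

theory Defs
  imports "HOL-Analysis.Analysis" "HOL-Library.Disjoint_Sets"
begin

definition proj :: "'n set \<Rightarrow> real ^ 'n \<Rightarrow> ('n \<Rightarrow> real)" where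
  "proj J x = restrict (\<lambda>j. x $ j) J"

definition induces_factorization :: "(real ^ 'n) set \<Rightarrow> 'n set set \<Rightarrow> bool" where
  "induces_factorization X P \<longleftrightarrow> partition_on (UNIV :: 'n set) P \<and>
     (\<exists>Xs :: 'n set \<Rightarrow> ('n \<Rightarrow> real) set. X = {x. \<forall>J\<in>P. proj J x \<in> Xs J})"

end

theory Submission
  imports Defs
begin

text \<open>Call \<open>X\<close> split along a coordinate set \<open>S\<close> if splicing the \<open>S\<close>-coordinates of one point
  of \<open>X\<close> with the remaining coordinates of another always stays in \<open>X\<close>. A partition
  induces a factorization exactly when \<open>X\<close> splits along each of its blocks, and the sets
  along which \<open>X\<close> splits are closed under complement and intersection. Hence the
  intersection of all splitting sets containing a coordinate \<open>i\<close> is a splitting set, and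
  these minimal splitting sets partition the coordinates; every block of a factorizing
  partition, being a splitting set, is a union of them.\<close>

definition splice :: "'n set \<Rightarrow> 'a ^ 'n \<Rightarrow> 'a ^ 'n \<Rightarrow> 'a ^ 'n" where
  "splice S x y = (\<chi> j. if j \<in> S then x $ j else y $ j)"

definition splits :: "('a ^ 'n) set \<Rightarrow> 'n set \<Rightarrow> bool" where
  "splits X S \<longleftrightarrow> (\<forall>x\<in>X. \<forall>y\<in>X. splice S x y \<in> X)"

lemma proj_eq_iff: "proj J x = proj J y \<longleftrightarrow> (\<forall>j\<in>J. x $ j = y $ j)"
  by (auto simp: proj_def restrict_def fun_eq_iff)

lemma splits_UNIV: "splits X UNIV"
  by (simp add: splits_def splice_def)

lemma splits_Compl:
  fixes X :: "('a ^ 'n) set"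
  assumes "splits X S"
  shows "splits X (- S)"
proof -
  have "splice (- S) x y = splice S y x" for x y :: "'a ^ 'n"
    by (simp add: splice_def vec_eq_iff)
  then show ?thesis
    using assms by (simp add: splits_def)
qed

lemma splits_Int:
  fixes X :: "('a ^ 'n) set"
  assumes "splits X S" "splits X T"
  shows "splits X (S \<inter> T)"
proof -
  have "splice (S \<inter> T) x y = splice S (splice T x y) y" for x y :: "'a ^ 'n"
    by (simp add: splice_def vec_eq_iff)
  then show ?thesis
    using assms by (simp add: splits_def)
qed

lemma splits_Inter: "finite F \<Longrightarrow> \<forall>S\<in>F. splits X S \<Longrightarrow> splits X (\<Inter>F)"
  by (induction F rule: finite_induct) (auto simp: splits_UNIV splits_Int)

lemma splits_Union_agree:
  assumes "finite F" "F \<noteq> {}"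
    and splits: "\<forall>S\<in>F. splits X S"
    and agree: "\<forall>S\<in>F. \<exists>x\<in>X. \<forall>j\<in>S. z $ j = x $ j"
  shows "\<exists>w\<in>X. \<forall>j\<in>\<Union>F. z $ j = w $ j"
  using assms(1,2) splits agree
proof (induction F rule: finite_ne_induct)
  case (singleton S)
  then show ?case by simp
next
  case (insert S F)
  then obtain w where w: "w \<in> X" "\<forall>j\<in>\<Union>F. z $ j = w $ j"
    by auto
  from insert.prems obtain x where x: "x \<in> X" "\<forall>j\<in>S. z $ j = x $ j"
    by auto
  have "splice S x w \<in> X"
    using insert.prems x(1) w(1) by (simp add: splits_def)
  moreover have "\<forall>j\<in>\<Union>(insert S F). z $ j = splice S x w $ j"
    using x(2) w(2) by (auto simp: splice_def)
  ultimately show ?case by blast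
qed

lemma splits_if_induces_factorization:
  assumes "induces_factorization X P" "A \<in> P"
  shows "splits X A"
  unfolding splits_def
proof (intro ballI)
  from assms(1) obtain Xs where P: "partition_on UNIV P"
    and X: "X = {x. \<forall>J\<in>P. proj J x \<in> Xs J}"
    unfolding induces_factorization_def by blast
  fix x y assume "x \<in> X" "y \<in> X"
  have "proj J (splice A x y) = (if J = A then proj J x else proj J y)" if "J \<in> P" for J
  proof -
    have "J = A \<or> J \<inter> A = {}"
      using partition_onD2[OF P] \<open>J \<in> P\<close> assms(2) by (meson disjointD)
    then show ?thesis
      by (auto simp: proj_eq_iff splice_def)
  qed
  then show "splice A x y \<in> X"
    using \<open>x \<in> X\<close> \<open>y \<in> X\<close> X by auto
qed

lemma induces_factorization_if_splits:
  fixes X :: "(real ^ 'n) set"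
  assumes P: "partition_on UNIV P" and splits: "\<forall>A\<in>P. splits X A"
  shows "induces_factorization X P"
  unfolding induces_factorization_def
proof (intro conjI exI)
  have UP: "\<Union>P = UNIV"
    using P by (simp add: partition_on_def)
  have "z \<in> X" if "\<forall>J\<in>P. proj J z \<in> proj J ` X" for z
  proof -
    have "\<forall>J\<in>P. \<exists>x\<in>X. \<forall>j\<in>J. z $ j = x $ j"
      using that by (simp add: image_iff proj_eq_iff)
    moreover have "P \<noteq> {}"
      using UP by auto
    ultimately obtain w where "w \<in> X" "\<forall>j\<in>\<Union>P. z $ j = w $ j"
      using splits_Union_agree[OF finite _ splits] by blast
    moreover from this(2) have "z = w"
      using UP by (simp add: vec_eq_iff)
    ultimately show ?thesis
      by simp
  qed
  then show "X = {z. \<forall>J\<in>P. proj J z \<in> proj J ` X}"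
    by blast
qed (rule P)

definition splitting_class :: "('a ^ 'n) set \<Rightarrow> 'n \<Rightarrow> 'n set" where
  "splitting_class X i = \<Inter>{S. splits X S \<and> i \<in> S}"

lemma splits_splitting_class: "splits X (splitting_class X i)"
  unfolding splitting_class_def by (rule splits_Inter) auto

lemma mem_splitting_class: "i \<in> splitting_class X i"
  by (simp add: splitting_class_def)

lemma splitting_class_subset: "splits X S \<Longrightarrow> i \<in> S \<Longrightarrow> splitting_class X i \<subseteq> S"
  by (auto simp: splitting_class_def)

lemma splitting_class_eq:
  assumes "k \<in> splitting_class X i"
  shows "splitting_class X k = splitting_class X i"
proof
  show "splitting_class X k \<subseteq> splitting_class X i"
    using assms splits_splitting_class splitting_class_subset by blast
  have "i \<in> splitting_class X k"
  proof (rule ccontr)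
    assume "i \<notin> splitting_class X k"
    then have "splitting_class X i \<subseteq> - splitting_class X k"
      by (intro splitting_class_subset splits_Compl splits_splitting_class) simp
    then show False
      using assms mem_splitting_class by blast
  qed
  then show "splitting_class X i \<subseteq> splitting_class X k"
    using splits_splitting_class splitting_class_subset by blast
qed

lemma partition_on_splitting_classes: "partition_on UNIV (range (splitting_class X))"
proof (rule partition_onI)
  show "\<Union>(range (splitting_class X)) = UNIV" "{} \<notin> range (splitting_class X)"
    using mem_splitting_class by blast+
next
  fix p q assume "p \<in> range (splitting_class X)" "q \<in> range (splitting_class X)" "p \<noteq> q"
  then show "disjnt p q"
    unfolding disjnt_def using splitting_class_eq by (metis disjoint_iff rangeE)
qed

lemma splits_eq_Union_splitting_classes:
  assumes "splits X I"
  shows "I = \<Union>{J\<in>range (splitting_class X). J \<subseteq> I}"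
  using splitting_class_subset[OF assms] mem_splitting_class by blast

theorem lemma2:
  fixes X :: "(real ^ 'n) set"
  shows "\<exists>P. induces_factorization X P \<and>
           (\<forall>Q. induces_factorization X Q \<longrightarrow> (\<forall>I\<in>Q. I = \<Union>{J\<in>P. J \<subseteq> I}))"
proof (intro exI conjI allI impI ballI)
  show "induces_factorization X (range (splitting_class X))"
    by (auto intro: induces_factorization_if_splits partition_on_splitting_classes
        splits_splitting_class)
next
  fix Q I assume "induces_factorization X Q" "I \<in> Q"
  then show "I = \<Union>{J\<in>range (splitting_class X). J \<subseteq> I}"
    by (intro splits_eq_Union_splitting_classes splits_if_induces_factorization)
qed

end
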